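(* Let $(R,\mathfrak m)$ be a one-dimensional Cohen–Macaulay local ring with a canonical fractional ideal $K$. Let $T$ be a ring with $R\subseteq T\subseteq\overline R$ which is a finitely generated $R$-module, such that $K\subseteq T$ and $R\neq T$, and let $I=R:T$. Then $T/K\cong\mathrm K_{R/I}$; hence $\ell_R(T/K)=\ell_R(R/I)$.
   Context: $\overline R$ is the integral closure of $R$ in its total ring of fractions $\mathrm Q(R)$. A canonical fractional ideal is an $R$-submodule $K\subseteq\mathrm Q(R)$ with $R\subseteq K\subseteq\overline R$ and $K\cong\mathrm K_R$. $R:T=\{x\in R:xT\subseteq R\}$. $\mathrm K_{R/I}$ denotes the canonical module of $R/I$. *)

theory Defs
  imports Main "HOL-Library.Extended_Nat"
begin

text \<open>The ambient type 'q (a commutative ring) plays the role of the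
total ring of fractions Q(R); the ring R, ideals, fractional ideals and all modules
considered are subsets of 'q. Module quotients M/N are represented by pairs N \<subseteq> M of
R-submodules of 'q.\<close>

definition subring :: "'q::comm_ring_1 set \<Rightarrow> bool" where
  "subring R \<longleftrightarrow> 0 \<in> R \<and> 1 \<in> R \<and> (\<forall>x\<in>R. \<forall>y\<in>R. x + y \<in> R \<and> x * y \<in> R \<and> - x \<in> R)"

definition nzd :: "'q::comm_ring_1 set \<Rightarrow> 'q \<Rightarrow> bool" where
  "nzd R a \<longleftrightarrow> a \<in> R \<and> (\<forall>b\<in>R. a * b = 0 \<longrightarrow> b = 0)"

definition total_ring_of_fractions :: "'q::comm_ring_1 set \<Rightarrow> bool" where
  "total_ring_of_fractions R \<longleftrightarrow> subring R \<and>
     (\<forall>s. nzd R s \<longrightarrow> (\<exists>u. s * u = 1)) \<and>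
     (\<forall>q. \<exists>a s. a \<in> R \<and> nzd R s \<and> q * s = a)"

definition submodule :: "'q::comm_ring_1 set \<Rightarrow> 'q set \<Rightarrow> bool" where
  "submodule R M \<longleftrightarrow> 0 \<in> M \<and> (\<forall>x\<in>M. \<forall>y\<in>M. x + y \<in> M) \<and> (\<forall>r\<in>R. \<forall>x\<in>M. r * x \<in> M)"

definition rspan :: "'q::comm_ring_1 set \<Rightarrow> 'q set \<Rightarrow> 'q set" where
  "rspan R F = {\<Sum>f\<in>F. c f * f | c. \<forall>f\<in>F. c f \<in> R}"

definition fin_gen :: "'q::comm_ring_1 set \<Rightarrow> 'q set \<Rightarrow> bool" where
  "fin_gen R M \<longleftrightarrow> (\<exists>F. finite F \<and> F \<subseteq> M \<and> M = rspan R F)"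

definition ideal :: "'q::comm_ring_1 set \<Rightarrow> 'q set \<Rightarrow> bool" where
  "ideal R J \<longleftrightarrow> J \<subseteq> R \<and> submodule R J"

definition prime_ideal :: "'q::comm_ring_1 set \<Rightarrow> 'q set \<Rightarrow> bool" where
  "prime_ideal R P \<longleftrightarrow> ideal R P \<and> P \<noteq> R \<and> (\<forall>a\<in>R. \<forall>b\<in>R. a * b \<in> P \<longrightarrow> a \<in> P \<or> b \<in> P)"

definition maximal_ideal :: "'q::comm_ring_1 set \<Rightarrow> 'q set \<Rightarrow> bool" where
  "maximal_ideal R m \<longleftrightarrow> ideal R m \<and> m \<noteq> R \<and> (\<forall>J. ideal R J \<and> m \<subseteq> J \<longrightarrow> J = m \<or> J = R)"

definition noetherian_ring :: "'q::comm_ring_1 set \<Rightarrow> bool" where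
  "noetherian_ring R \<longleftrightarrow> subring R \<and> (\<forall>J. ideal R J \<longrightarrow> fin_gen R J)"

definition local_ring :: "'q::comm_ring_1 set \<Rightarrow> 'q set \<Rightarrow> bool" where
  "local_ring R m \<longleftrightarrow> noetherian_ring R \<and> maximal_ideal R m \<and> (\<forall>J. maximal_ideal R J \<longrightarrow> J = m)"

definition krull_dim :: "'q::comm_ring_1 set \<Rightarrow> enat" where
  "krull_dim R = Sup {enat n | n. \<exists>P :: nat \<Rightarrow> 'q set.
      (\<forall>i\<le>n. prime_ideal R (P i)) \<and> (\<forall>i<n. P i \<subset> P (Suc i))}"

definition depth :: "'q::comm_ring_1 set \<Rightarrow> 'q set \<Rightarrow> enat" where
  "depth R m = Sup {enat n | n. \<exists>x :: nat \<Rightarrow> 'q. (\<forall>i<n. x i \<in> m) \<and>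
      (\<forall>i<n. \<forall>a\<in>R. x i * a \<in> rspan R (x ` {..<i}) \<longrightarrow> a \<in> rspan R (x ` {..<i}))}"

definition cohen_macaulay_local :: "'q::comm_ring_1 set \<Rightarrow> 'q set \<Rightarrow> bool" where
  "cohen_macaulay_local R m \<longleftrightarrow> local_ring R m \<and> depth R m = krull_dim R"

definition mlength :: "'q::comm_ring_1 set \<Rightarrow> 'q set \<Rightarrow> 'q set \<Rightarrow> enat" where
  "mlength R N M = Sup {enat n | n. \<exists>L :: nat \<Rightarrow> 'q set. L 0 = N \<and> L n = M \<and>
      (\<forall>i\<le>n. submodule R (L i)) \<and> (\<forall>i<n. L i \<subset> L (Suc i))}"

text \<open>M/N is an injective module over R/A (Baer's criterion: every R/A-linear map from an
ideal J/A of R/A to M/N extends to R/A).\<close>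
definition injective_over_quot :: "'q::comm_ring_1 set \<Rightarrow> 'q set \<Rightarrow> 'q set \<Rightarrow> 'q set \<Rightarrow> bool" where
  "injective_over_quot R A N M \<longleftrightarrow>
     (\<forall>J f. ideal R J \<and> A \<subseteq> J \<and> f ` J \<subseteq> M \<and>
        (\<forall>a\<in>J. \<forall>b\<in>J. f (a + b) - (f a + f b) \<in> N) \<and>
        (\<forall>r\<in>R. \<forall>a\<in>J. f (r * a) - r * f a \<in> N) \<and>
        (\<forall>a\<in>A. f a \<in> N)
      \<longrightarrow> (\<exists>y\<in>M. \<forall>a\<in>J. f a - a * y \<in> N))"

text \<open>M/N is an R/A-module (A M \<subseteq> N) which is an injective hull over R/A of the residue
field (for a local ring the simple module S/N is the residue field). For the Artinian
local ring R/A this is the canonical module K_{R/A} = E_{R/A}(k).\<close>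
definition inj_hull_residue :: "'q::comm_ring_1 set \<Rightarrow> 'q set \<Rightarrow> 'q set \<Rightarrow> 'q set \<Rightarrow> bool" where
  "inj_hull_residue R A N M \<longleftrightarrow> submodule R N \<and> submodule R M \<and> N \<subseteq> M \<and>
     (\<forall>a\<in>A. \<forall>x\<in>M. a * x \<in> N) \<and>
     injective_over_quot R A N M \<and>
     (\<exists>S. submodule R S \<and> N \<subseteq> S \<and> S \<subseteq> M \<and> mlength R N S = 1 \<and>
        (\<forall>L. submodule R L \<and> N \<subset> L \<and> L \<subseteq> M \<longrightarrow> N \<subset> L \<inter> S))"

text \<open>K is a canonical module of the one-dimensional Cohen-Macaulay local ring (R,m):
K is finitely generated, and for an element x \<in> m regular on R and on K, K/xK is
the canonical module of R/xR (Bruns-Herzog 3.3.5).\<close>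
definition canonical_module_dim1 :: "'q::comm_ring_1 set \<Rightarrow> 'q set \<Rightarrow> 'q set \<Rightarrow> bool" where
  "canonical_module_dim1 R m K \<longleftrightarrow> submodule R K \<and> fin_gen R K \<and>
     (\<exists>x\<in>m. nzd R x \<and> (\<forall>k\<in>K. x * k = 0 \<longrightarrow> k = 0) \<and>
        inj_hull_residue R ((\<lambda>r. x * r) ` R) ((\<lambda>k. x * k) ` K) K)"

definition integral_closure :: "'q::comm_ring_1 set \<Rightarrow> 'q set" where
  "integral_closure R = {q. \<exists>n c. (\<forall>i<n. c i \<in> R) \<and> q ^ n + (\<Sum>i<n. c i * q ^ i) = 0}"

definition colon :: "'q::comm_ring_1 set \<Rightarrow> 'q set \<Rightarrow> 'q set" where
  "colon R T = {x \<in> R. \<forall>t\<in>T. x * t \<in> R}"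

end

theory Submission
  imports Defs
begin

text \<open>Write D L for the fractional colon K : L. Since K/xK is the injective hull of the
  residue field over R/xR, the module Q/K is injective with respect to ideals containing a power
  of x, and the socle element of u K/K (u = 1/x) separates each such ideal J from every element
  of R outside J. Hence D (D J) = J for these ideals J and D (D L) = L for the submodules
  K \<subseteq> L \<subseteq> T, so D is an inclusion-reversing bijection between the submodules of T/K and the
  ideals of R containing R : T = D T, with D K = R and D (R : T) = T. This gives the equality
  of lengths. Injectivity of T/K over R/(R : T) is inherited from Q/K because D (R : T) = T,
  and the socle of T/K is D m / K, which is simple and essential.\<close>

lemma subringD:
  assumes "subring R"
  shows "0 \<in> R" "1 \<in> R" "a \<in> R \<Longrightarrow> b \<in> R \<Longrightarrow> a + b \<in> R"
    "a \<in> R \<Longrightarrow> b \<in> R \<Longrightarrow> a * b \<in> R" "a \<in> R \<Longrightarrow> - a \<in> R"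
    "a \<in> R \<Longrightarrow> b \<in> R \<Longrightarrow> a - b \<in> R" "a \<in> R \<Longrightarrow> a ^ k \<in> R"
proof -
  show "0 \<in> R" "1 \<in> R" "a \<in> R \<Longrightarrow> b \<in> R \<Longrightarrow> a + b \<in> R" "a \<in> R \<Longrightarrow> b \<in> R \<Longrightarrow> a * b \<in> R"
    "a \<in> R \<Longrightarrow> - a \<in> R" using assms unfolding subring_def by auto
  show "a \<in> R \<Longrightarrow> b \<in> R \<Longrightarrow> a - b \<in> R"
    using assms unfolding subring_def by (metis diff_conv_add_uminus)
  show "a \<in> R \<Longrightarrow> a ^ k \<in> R"
    by (induction k) (use assms in \<open>auto simp: subring_def\<close>)
qed

lemma subring_sum:
  assumes "subring R" "\<And>f. f \<in> F \<Longrightarrow> g f \<in> R"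
  shows "sum g F \<in> R"
proof (cases "finite F")
  case True
  then show ?thesis using assms(2)
    by (induction F rule: finite_induct) (auto intro: subringD[OF assms(1)])
qed (simp add: subringD(1)[OF assms(1)])

lemma submoduleD:
  assumes "subring R" "submodule R M"
  shows "0 \<in> M" "a \<in> M \<Longrightarrow> b \<in> M \<Longrightarrow> a + b \<in> M" "r \<in> R \<Longrightarrow> a \<in> M \<Longrightarrow> r * a \<in> M"
    "a \<in> M \<Longrightarrow> - a \<in> M" "a \<in> M \<Longrightarrow> b \<in> M \<Longrightarrow> a - b \<in> M"
proof -
  show M: "0 \<in> M" "a \<in> M \<Longrightarrow> b \<in> M \<Longrightarrow> a + b \<in> M" "r \<in> R \<Longrightarrow> a \<in> M \<Longrightarrow> r * a \<in> M"
    for a b r using assms(2) unfolding submodule_def by auto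
  have "- 1 \<in> R" using subringD[OF assms(1)] by auto
  then show neg: "a \<in> M \<Longrightarrow> - a \<in> M" for a using M(3) by fastforce
  show "a \<in> M \<Longrightarrow> b \<in> M \<Longrightarrow> a - b \<in> M" using M(2) neg by (metis diff_conv_add_uminus)
qed

lemma submodule_self: "subring R \<Longrightarrow> submodule R R"
  unfolding submodule_def using subringD by blast

lemma submodule_scaled:
  assumes "submodule R L"
  shows "submodule R ((*) c ` L)"
  unfolding submodule_def
proof (intro conjI ballI)
  show "0 \<in> (*) c ` L" using assms unfolding submodule_def by force
next
  fix y z assume "y \<in> (*) c ` L" "z \<in> (*) c ` L"
  then obtain a b where "y = c * a" "z = c * b" "a \<in> L" "b \<in> L" by blast
  then show "y + z \<in> (*) c ` L"
    using assms unfolding submodule_def by (metis distrib_left imageI)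
next
  fix r y assume "r \<in> R" "y \<in> (*) c ` L"
  then obtain a where "y = c * a" "a \<in> L" by blast
  then show "r * y \<in> (*) c ` L"
    using assms \<open>r \<in> R\<close> unfolding submodule_def by (metis mult.left_commute imageI)
qed

lemma idealD:
  assumes "ideal R J"
  shows "J \<subseteq> R" "0 \<in> J" "a \<in> J \<Longrightarrow> b \<in> J \<Longrightarrow> a + b \<in> J"
    "r \<in> R \<Longrightarrow> a \<in> J \<Longrightarrow> r * a \<in> J" "r \<in> R \<Longrightarrow> a \<in> J \<Longrightarrow> a * r \<in> J"
  using assms unfolding ideal_def submodule_def by (auto simp: mult.commute)

lemma ideal_eq_if_one: "ideal R J \<Longrightarrow> 1 \<in> J \<Longrightarrow> J = R"
  unfolding ideal_def submodule_def by (metis mult.right_neutral subsetI subset_antisym)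

lemma ideal_principal: "subring R \<Longrightarrow> c \<in> R \<Longrightarrow> ideal R ((*) c ` R)"
  unfolding ideal_def using submodule_scaled submodule_self subringD(4) by blast

lemma ideal_preimage:
  assumes R: "subring R" and J: "ideal R J"
  shows "ideal R {r \<in> R. c * r \<in> J}"
  unfolding ideal_def submodule_def
proof (intro conjI ballI)
  show "0 \<in> {r \<in> R. c * r \<in> J}" using subringD(1)[OF R] idealD(2)[OF J] by simp
next
  fix a b assume "a \<in> {r \<in> R. c * r \<in> J}" "b \<in> {r \<in> R. c * r \<in> J}"
  then show "a + b \<in> {r \<in> R. c * r \<in> J}"
    using subringD(3)[OF R] idealD(3)[OF J] by (simp add: distrib_left)
next
  fix s a assume "s \<in> R" "a \<in> {r \<in> R. c * r \<in> J}"
  then show "s * a \<in> {r \<in> R. c * r \<in> J}"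
    using subringD(4)[OF R] idealD(4)[OF J] by (auto simp: mult.left_commute[of c s])
qed auto

definition adjoin :: "'q::comm_ring_1 set \<Rightarrow> 'q set \<Rightarrow> 'q \<Rightarrow> 'q set" where
  "adjoin R N c = {y + a * c | y a. y \<in> N \<and> a \<in> R}"

lemma submodule_adjoin:
  assumes R: "subring R" and N: "submodule R N"
  shows "submodule R (adjoin R N c)" "N \<subseteq> adjoin R N c" "c \<in> adjoin R N c"
proof -
  note R_closed = subringD[OF R] and N_closed = submoduleD[OF R N]
  show "submodule R (adjoin R N c)" unfolding submodule_def adjoin_def
  proof (intro conjI ballI)
    show "0 \<in> {y + a * c | y a. y \<in> N \<and> a \<in> R}" using N_closed(1) R_closed(1) by force
  next
    fix z z' assume "z \<in> {y + a * c | y a. y \<in> N \<and> a \<in> R}" "z' \<in> {y + a * c | y a. y \<in> N \<and> a \<in> R}"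
    then obtain y a y' a' where "z = y + a * c" "z' = y' + a' * c" "y \<in> N" "a \<in> R" "y' \<in> N" "a' \<in> R"
      by blast
    moreover have "z + z' = (y + y') + (a + a') * c" using calculation by (simp add: algebra_simps)
    ultimately show "z + z' \<in> {y + a * c | y a. y \<in> N \<and> a \<in> R}" using N_closed(2) R_closed(3) by blast
  next
    fix r z assume "r \<in> R" "z \<in> {y + a * c | y a. y \<in> N \<and> a \<in> R}"
    moreover obtain y a where "z = y + a * c" "y \<in> N" "a \<in> R" using calculation(2) by blast
    moreover have "r * z = r * y + (r * a) * c" using calculation by (simp add: algebra_simps)
    ultimately show "r * z \<in> {y + a * c | y a. y \<in> N \<and> a \<in> R}" using N_closed(3) R_closed(4) by blast
  qed
  show "N \<subseteq> adjoin R N c" unfolding adjoin_def using R_closed(1) by force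
  show "c \<in> adjoin R N c" unfolding adjoin_def using N_closed(1) R_closed(2) by force
qed

lemma ideal_adjoin:
  assumes "subring R" "ideal R J" "c \<in> R"
  shows "ideal R (adjoin R J c)"
  using assms submodule_adjoin(1)[of R J c] idealD(1)[OF assms(2)] subringD[OF assms(1)]
  unfolding ideal_def adjoin_def by blast

lemma adjoin_subset:
  "submodule R M \<Longrightarrow> N \<subseteq> M \<Longrightarrow> c \<in> M \<Longrightarrow> adjoin R N c \<subseteq> M"
  unfolding adjoin_def submodule_def by blast

lemma adjoin_components:
  obtains \<alpha> \<beta> where "\<And>b. b \<in> adjoin R N c \<Longrightarrow> \<alpha> b \<in> N \<and> \<beta> b \<in> R \<and> b = \<alpha> b + \<beta> b * c"
proof -
  have "\<forall>b\<in>adjoin R N c. \<exists>p. fst p \<in> N \<and> snd p \<in> R \<and> b = fst p + snd p * c"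
  proof
    fix b assume "b \<in> adjoin R N c"
    then obtain y a where "y \<in> N" "a \<in> R" "b = y + a * c" unfolding adjoin_def by blast
    then show "\<exists>p. fst p \<in> N \<and> snd p \<in> R \<and> b = fst p + snd p * c" by (intro exI[of _ "(y, a)"]) simp
  qed
  from bchoice[OF this] obtain p
    where "\<forall>b\<in>adjoin R N c. fst (p b) \<in> N \<and> snd (p b) \<in> R \<and> b = fst (p b) + snd (p b) * c"
    by blast
  then show ?thesis using that[of "\<lambda>b. fst (p b)" "\<lambda>b. snd (p b)"] by blast
qed

lemma nzd_power:
  assumes R: "subring R" and s: "nzd R s"
  shows "nzd R (s ^ k)"
proof (induction k)
  case (Suc k)
  have "b = 0" if "b \<in> R" "s ^ Suc k * b = 0" for b
  proof -
    have "s * (s ^ k * b) = 0" using that(2) by (simp add: mult.assoc)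
    then have "s ^ k * b = 0" using s subringD(4,7)[OF R] that(1) unfolding nzd_def by blast
    then show ?thesis using Suc that(1) unfolding nzd_def by blast
  qed
  then show ?case using s subringD(7)[OF R] unfolding nzd_def by blast
qed (simp add: nzd_def subringD(2)[OF R])

section \<open>Prime ideals\<close>

lemma ideal_maximal_avoiding:
  assumes "ideal R J0" "J0 \<inter> M = {}"
  obtains P where "ideal R P" "J0 \<subseteq> P" "P \<inter> M = {}"
    "\<And>Q. ideal R Q \<Longrightarrow> P \<subseteq> Q \<Longrightarrow> Q \<inter> M = {} \<Longrightarrow> Q = P"
proof -
  define A where "A = {J. ideal R J \<and> J0 \<subseteq> J \<and> J \<inter> M = {}}"
  have "\<forall>C\<in>chains A. \<exists>U\<in>A. \<forall>X\<in>C. X \<subseteq> U"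
  proof
    fix C assume C: "C \<in> chains A"
    show "\<exists>U\<in>A. \<forall>X\<in>C. X \<subseteq> U"
    proof (cases "C = {}")
      case True then show ?thesis using assms unfolding A_def by auto
    next
      case False
      have CA: "C \<subseteq> A" using chainsD2[OF C] .
      have "\<Union>C \<in> A"
        unfolding A_def ideal_def submodule_def
      proof (intro CollectI conjI ballI)
        obtain X0 where X0: "X0 \<in> C" using False by auto
        show "\<Union>C \<subseteq> R" "\<Union>C \<inter> M = {}" using CA unfolding A_def ideal_def by auto
        show "0 \<in> \<Union>C" "J0 \<subseteq> \<Union>C" using CA X0 unfolding A_def ideal_def submodule_def by auto
      next
        fix a b assume "a \<in> \<Union>C" "b \<in> \<Union>C"
        then obtain X where "X \<in> C" "a \<in> X" "b \<in> X" using chainsD[OF C] by blast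
        then show "a + b \<in> \<Union>C" using CA unfolding A_def ideal_def submodule_def by blast
      next
        fix r a assume "r \<in> R" "a \<in> \<Union>C"
        then show "r * a \<in> \<Union>C" using CA unfolding A_def ideal_def submodule_def by blast
      qed
      then show ?thesis by blast
    qed
  qed
  from Zorn_Lemma2[OF this] obtain P where P: "P \<in> A" and max: "\<forall>X\<in>A. P \<subseteq> X \<longrightarrow> X = P"
    by blast
  show ?thesis
  proof (rule that)
    show "ideal R P" "J0 \<subseteq> P" "P \<inter> M = {}" using P unfolding A_def by auto
    show "Q = P" if "ideal R Q" "P \<subseteq> Q" "Q \<inter> M = {}" for Q
      using max that \<open>J0 \<subseteq> P\<close> unfolding A_def by blast
  qed
qed

lemma prime_ideal_avoiding:
  assumes R: "subring R" and J0: "ideal R J0" "J0 \<inter> M = {}"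
    and M: "1 \<in> M" "M \<subseteq> R" "\<And>a b. a \<in> M \<Longrightarrow> b \<in> M \<Longrightarrow> a * b \<in> M"
  obtains P where "prime_ideal R P" "J0 \<subseteq> P" "P \<inter> M = {}"
proof -
  obtain P where P: "ideal R P" "J0 \<subseteq> P" "P \<inter> M = {}"
    and max: "\<And>Q. ideal R Q \<Longrightarrow> P \<subseteq> Q \<Longrightarrow> Q \<inter> M = {} \<Longrightarrow> Q = P"
    using ideal_maximal_avoiding[OF J0] by blast
  note R_closed = subringD[OF R] and P_ideal = idealD[OF P(1)]
  have meets: "\<exists>p r. p \<in> P \<and> r \<in> R \<and> p + r * a \<in> M" if a: "a \<in> R" "a \<notin> P" for a
  proof (rule ccontr)
    assume "\<not> ?thesis"
    then have "adjoin R P a \<inter> M = {}" unfolding adjoin_def by blast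
    moreover have "ideal R (adjoin R P a)" "P \<subseteq> adjoin R P a" "a \<in> adjoin R P a"
      using ideal_adjoin[OF R P(1) a(1)] submodule_adjoin[OF R, of P a] P(1)
      unfolding ideal_def by auto
    ultimately show False using max a(2) by blast
  qed
  have "prime_ideal R P" unfolding prime_ideal_def
  proof (intro conjI ballI impI)
    show "ideal R P" by fact
    show "P \<noteq> R" using P(3) M(1) R_closed(2) by blast
  next
    fix a b assume ab: "a \<in> R" "b \<in> R" "a * b \<in> P"
    show "a \<in> P \<or> b \<in> P"
    proof (rule ccontr)
      assume "\<not> ?thesis"
      then obtain p r p' r' where pr: "p \<in> P" "r \<in> R" "p + r * a \<in> M"
        and pr': "p' \<in> P" "r' \<in> R" "p' + r' * b \<in> M"
        using meets ab by meson
      have "(p + r * a) * (p' + r' * b) = (p' + r' * b) * p + (r * a) * p' + (r * r') * (a * b)"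
        by (simp add: algebra_simps)
      also have "\<dots> \<in> P"
      proof -
        have "p' + r' * b \<in> R" "r * a \<in> R" "r * r' \<in> R" using pr pr' ab M(2) R_closed(4) by blast+
        then show ?thesis using pr(1) pr'(1) ab(3) P_ideal(3,4) by (metis mult.commute)
      qed
      finally show False using M(3)[OF pr(3) pr'(3)] P(3) by blast
    qed
  qed
  then show ?thesis using that P by blast
qed

lemma two_le_krull_dim:
  assumes "prime_ideal R P0" "prime_ideal R P1" "prime_ideal R P2" "P0 \<subset> P1" "P1 \<subset> P2"
  shows "2 \<le> krull_dim R"
proof -
  define P where "P = (\<lambda>i::nat. if i = 0 then P0 else if i = 1 then P1 else P2)"
  have "(\<forall>i\<le>2. prime_ideal R (P i)) \<and> (\<forall>i<2. P i \<subset> P (Suc i))"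
    using assms unfolding P_def by (auto simp: le_Suc_eq less_Suc_eq numeral_2_eq_2)
  then have "enat 2 \<le> krull_dim R" unfolding krull_dim_def by (blast intro: Sup_upper)
  then show ?thesis by (simp add: numeral_eq_enat)
qed

text \<open>A prime ideal avoiding the multiplicative set of all t s^k with t \<in> R - P lies
  inside P and misses s.\<close>
lemma prime_ideal_not_minimal:
  assumes R: "subring R" and P: "prime_ideal R P" and s: "nzd R s" "s \<in> P"
  obtains P' where "prime_ideal R P'" "P' \<subset> P"
proof -
  note R_closed = subringD[OF R]
  have P_ideal: "ideal R P" and PR: "P \<noteq> R"
    and Pp: "\<And>a b. a \<in> R \<Longrightarrow> b \<in> R \<Longrightarrow> a * b \<in> P \<Longrightarrow> a \<in> P \<or> b \<in> P"
    using P unfolding prime_ideal_def by blast+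
  have one: "1 \<notin> P" using ideal_eq_if_one[OF P_ideal] PR by blast
  have sR: "s \<in> R" using s unfolding nzd_def by blast
  define M where "M = {t * s ^ k | t k. t \<in> R \<and> t \<notin> P}"
  have zero: "ideal R {0}" unfolding ideal_def submodule_def using R_closed(1) by auto
  have avoid: "{0} \<inter> M = {}"
  proof -
    have "t = 0" if "t \<in> R" "t * s ^ k = 0" for t k
      using nzd_power[OF R s(1), of k] that unfolding nzd_def by (simp add: mult.commute)
    then show ?thesis unfolding M_def using idealD(2)[OF P_ideal] by (auto simp del: mult_eq_0_iff)
  qed
  have one_M: "1 \<in> M"
  proof -
    have "(1::'a) = 1 * s ^ 0" by simp
    then show ?thesis unfolding M_def using one R_closed(2) by blast
  qed
  have M_R: "M \<subseteq> R" unfolding M_def using R_closed(4,7) sR by blast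
  have mult_M: "a * b \<in> M" if ab: "a \<in> M" "b \<in> M" for a b
  proof -
    obtain t k t' k' where tt: "a = t * s ^ k" "b = t' * s ^ k'" "t \<in> R" "t \<notin> P" "t' \<in> R" "t' \<notin> P"
      using ab unfolding M_def by blast
    have "a * b = (t * t') * s ^ (k + k')" using tt by (simp add: algebra_simps power_add)
    moreover have "t * t' \<in> R" "t * t' \<notin> P" using tt Pp R_closed(4) by blast+
    ultimately show "a * b \<in> M" unfolding M_def by blast
  qed
  obtain P' where P': "prime_ideal R P'" "P' \<inter> M = {}"
    using prime_ideal_avoiding[OF R zero avoid one_M M_R mult_M] by blast
  have "P' \<subseteq> P"
  proof
    fix a assume a: "a \<in> P'"
    then have "a \<in> R" using P'(1) unfolding prime_ideal_def ideal_def by blast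
    then have "a * s ^ 0 \<notin> M" using a P'(2) by auto
    then show "a \<in> P" using \<open>a \<in> R\<close> unfolding M_def by blast
  qed
  moreover have "s \<notin> P'"
  proof -
    have "1 * s ^ 1 \<in> M" unfolding M_def using one R_closed(2) by blast
    then show ?thesis using P'(2) by auto
  qed
  ultimately show ?thesis using that P'(1) s(2) by blast
qed

section \<open>Length\<close>

definition submodule_chain :: "'q::comm_ring_1 set \<Rightarrow> (nat \<Rightarrow> 'q set) \<Rightarrow> nat \<Rightarrow> bool" where
  "submodule_chain R L k \<longleftrightarrow> (\<forall>i\<le>k. submodule R (L i)) \<and> (\<forall>i<k. L i \<subset> L (Suc i))"

lemma mlength_chains:
  "mlength R N M = Sup {enat k | k. \<exists>L. L 0 = N \<and> L k = M \<and> submodule_chain R L k}"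
  unfolding mlength_def submodule_chain_def by simp

lemma submodule_chain_mono:
  assumes "submodule_chain R L k" "i \<le> j" "j \<le> k"
  shows "L i \<subseteq> L j"
  using assms(2,3)
proof (induction j)
  case (Suc j)
  show ?case
  proof (cases "i = Suc j")
    case False
    then have "L i \<subseteq> L j" "L j \<subset> L (Suc j)"
      using Suc assms(1) unfolding submodule_chain_def by auto
    then show ?thesis by blast
  qed simp
qed simp

lemma mlength_ge_chain:
  assumes "L 0 = N" "L k = M" "submodule_chain R L k"
  shows "enat k \<le> mlength R N M"
  unfolding mlength_chains using assms by (blast intro: Sup_upper)

lemma mlength_self: "mlength R N N = 0"
proof -
  have "k = 0" if "L 0 = N" "L k = N" "submodule_chain R L k" for L k
  proof (rule ccontr)
    assume "k \<noteq> 0"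
    then have "L 0 \<subset> L 1" "L 1 \<subseteq> L k"
      using that(3) submodule_chain_mono[OF that(3), of 1 k] unfolding submodule_chain_def by auto
    then show False using that(1,2) by blast
  qed
  then have "{enat k | k. \<exists>L. L 0 = N \<and> L k = N \<and> submodule_chain R L k} \<subseteq> {0}"
    by (auto simp: zero_enat_def)
  then have "Sup {enat k | k. \<exists>L. L 0 = N \<and> L k = N \<and> submodule_chain R L k} \<le> 0"
    by (intro Sup_least) auto
  then show ?thesis unfolding mlength_chains by simp
qed

lemma submodule_chain_second:
  assumes "submodule_chain R L k" "2 \<le> k"
  shows "submodule R (L 1)" "L 0 \<subset> L 1" "L 1 \<subset> L k"
proof -
  show "submodule R (L 1)" "L 0 \<subset> L 1"
    using assms unfolding submodule_chain_def by simp_all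
  have "L 1 \<subset> L 2" using assms unfolding submodule_chain_def by (simp add: numeral_2_eq_2)
  moreover have "L 2 \<subseteq> L k" using submodule_chain_mono[OF assms(1) assms(2) order.refl] .
  ultimately show "L 1 \<subset> L k" by blast
qed

lemma mlength_eq_1_iff:
  assumes N: "submodule R N" and S: "submodule R S" "N \<subseteq> S"
  shows "mlength R N S = 1 \<longleftrightarrow> N \<noteq> S \<and> (\<forall>L. submodule R L \<longrightarrow> N \<subseteq> L \<longrightarrow> L \<subseteq> S \<longrightarrow> L = N \<or> L = S)"
    (is "_ \<longleftrightarrow> _ \<and> ?simple")
proof
  assume len: "mlength R N S = 1"
  have "N \<noteq> S"
  proof
    assume "N = S"
    then show False using len mlength_self[of R N] by simp
  qed
  moreover have ?simple
  proof (intro allI impI)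
    fix L assume L: "submodule R L" "N \<subseteq> L" "L \<subseteq> S"
    let ?L = "\<lambda>i::nat. if i = 0 then N else if i = 1 then L else S"
    show "L = N \<or> L = S"
    proof (rule ccontr)
      assume "\<not> ?thesis"
      then have "submodule_chain R ?L 2"
        unfolding submodule_chain_def using N S L by (auto simp: le_Suc_eq less_Suc_eq numeral_2_eq_2)
      then have "enat 2 \<le> mlength R N S" using mlength_ge_chain[of ?L N 2 S] by simp
      then show False using len by (simp add: one_enat_def)
    qed
  qed
  ultimately show "N \<noteq> S \<and> ?simple" ..
next
  assume simple: "N \<noteq> S \<and> ?simple"
  have "{enat k | k. \<exists>L. L 0 = N \<and> L k = S \<and> submodule_chain R L k} = {enat 1}"
  proof (intro equalityI subsetI)
    fix z assume "z \<in> {enat k | k. \<exists>L. L 0 = N \<and> L k = S \<and> submodule_chain R L k}"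
    then obtain k L where z: "z = enat k" "L 0 = N" "L k = S" "submodule_chain R L k" by blast
    have "k \<noteq> 0" using z(2,3) simple by auto
    moreover have "\<not> 2 \<le> k" using submodule_chain_second[OF z(4)] z(2,3) simple by blast
    ultimately show "z \<in> {enat 1}" using z(1) by simp
  next
    let ?L = "\<lambda>i::nat. if i = 0 then N else S"
    have "submodule_chain R ?L 1" unfolding submodule_chain_def using N S simple by auto
    then have "\<exists>L. L 0 = N \<and> L 1 = S \<and> submodule_chain R L 1" by (intro exI[of _ ?L]) simp
    then show "z \<in> {enat k | k. \<exists>L. L 0 = N \<and> L k = S \<and> submodule_chain R L k}"
      if "z \<in> {enat 1}" for z using that by blast
  qed
  then show "mlength R N S = 1" unfolding mlength_chains by (simp add: one_enat_def)
qed

lemma mlength_le_antitone: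
  assumes anti: "\<And>L L'. L \<subseteq> L' \<Longrightarrow> D L' \<subseteq> D L"
    and sub: "\<And>L. submodule R L \<Longrightarrow> N \<subseteq> L \<Longrightarrow> L \<subseteq> M \<Longrightarrow> submodule R (D L)"
    and inj: "\<And>L L'. submodule R L \<Longrightarrow> N \<subseteq> L \<Longrightarrow> L \<subseteq> M \<Longrightarrow>
      submodule R L' \<Longrightarrow> N \<subseteq> L' \<Longrightarrow> L' \<subseteq> M \<Longrightarrow> D L = D L' \<Longrightarrow> L = L'"
  shows "mlength R N M \<le> mlength R (D M) (D N)"
  unfolding mlength_chains
proof (rule Sup_subset_mono, intro subsetI)
  fix z assume "z \<in> {enat k | k. \<exists>L. L 0 = N \<and> L k = M \<and> submodule_chain R L k}"
  then obtain k L where z: "z = enat k" and L: "L 0 = N" "L k = M" "submodule_chain R L k" by blast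
  have between: "submodule R (L i) \<and> N \<subseteq> L i \<and> L i \<subseteq> M" if "i \<le> k" for i
    using submodule_chain_mono[OF L(3), of 0 i] submodule_chain_mono[OF L(3), of i k] that L
    unfolding submodule_chain_def by auto
  have "submodule_chain R (\<lambda>i. D (L (k - i))) k"
    unfolding submodule_chain_def
  proof (intro conjI allI impI)
    fix i assume "i \<le> k"
    then show "submodule R (D (L (k - i)))" using sub between by simp
  next
    fix i assume i: "i < k"
    then have j: "k - i = Suc (k - Suc i)" "Suc (k - Suc i) \<le> k" by auto
    then have lt: "L (k - Suc i) \<subset> L (Suc (k - Suc i))" using L(3) unfolding submodule_chain_def by simp
    have "D (L (Suc (k - Suc i))) \<noteq> D (L (k - Suc i))"
    proof
      assume eq: "D (L (Suc (k - Suc i))) = D (L (k - Suc i))"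
      have "k - Suc i \<le> k" by simp
      then have "L (Suc (k - Suc i)) = L (k - Suc i)"
        using inj[OF _ _ _ _ _ _ eq] between[OF j(2)] between by blast
      then show False using lt by simp
    qed
    then show "D (L (k - i)) \<subset> D (L (k - Suc i))" using anti lt j(1) by auto
  qed
  then have "\<exists>L'. L' 0 = D M \<and> L' k = D N \<and> submodule_chain R L' k"
    using L(1,2) by (intro exI[of _ "\<lambda>i. D (L (k - i))"]) simp
  then show "z \<in> {enat k | k. \<exists>L. L 0 = D M \<and> L k = D N \<and> submodule_chain R L k}"
    using z by blast
qed

section \<open>Local rings\<close>

locale local_subring =
  fixes R m :: "'q::comm_ring_1 set"
  assumes local: "local_ring R m"
begin

lemma subring: "subring R"
  using local unfolding local_ring_def noetherian_ring_def by blast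

lemmas R_closed = subringD[OF subring]

lemma ideal_m: "ideal R m" and m_ne_R: "m \<noteq> R"
  using local unfolding local_ring_def maximal_ideal_def by auto

lemma one_notin_m: "1 \<notin> m"
  using ideal_eq_if_one[OF ideal_m] m_ne_R by blast

lemma unit_if_notin_m:
  assumes a: "a \<in> R" "a \<notin> m"
  obtains b where "b \<in> R" "a * b = 1"
proof (rule ccontr)
  assume no_inverse: "\<not> thesis"
  have "ideal R ((*) a ` R)" using ideal_principal[OF subring a(1)] .
  moreover have "(*) a ` R \<inter> {1} = {}" using no_inverse that by blast
  ultimately obtain P where P: "ideal R P" "(*) a ` R \<subseteq> P" "1 \<notin> P"
    and max: "\<And>Q. ideal R Q \<Longrightarrow> P \<subseteq> Q \<Longrightarrow> Q \<inter> {1} = {} \<Longrightarrow> Q = P"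
    by (rule ideal_maximal_avoiding) blast
  have "maximal_ideal R P" unfolding maximal_ideal_def
  proof (intro conjI allI impI)
    show "ideal R P" "P \<noteq> R" using P R_closed(2) by auto
    show "J = P \<or> J = R" if "ideal R J \<and> P \<subseteq> J" for J
      using that max ideal_eq_if_one by blast
  qed
  then have "P = m" using local unfolding local_ring_def by blast
  moreover have "a \<in> P" using P(2) R_closed(2) by (metis image_eqI mult_1_right subsetD)
  ultimately show False using a(2) by blast
qed

lemma ideal_subset_m:
  assumes J: "ideal R J" "J \<noteq> R"
  shows "J \<subseteq> m"
proof
  fix a assume a: "a \<in> J"
  show "a \<in> m"
  proof (rule ccontr)
    assume "a \<notin> m"
    then obtain b where "b \<in> R" "a * b = 1" using unit_if_notin_m idealD(1)[OF J(1)] a by blast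
    then have "1 \<in> J" using idealD(5)[OF J(1) _ a] by metis
    then show False using ideal_eq_if_one J by blast
  qed
qed

lemma prime_m: "prime_ideal R m"
  unfolding prime_ideal_def
proof (intro conjI ballI impI)
  show "ideal R m" "m \<noteq> R" by (fact ideal_m, fact m_ne_R)
next
  fix a b assume ab: "a \<in> R" "b \<in> R" "a * b \<in> m"
  show "a \<in> m \<or> b \<in> m"
  proof (rule ccontr)
    assume "\<not> ?thesis"
    then obtain a' b' where "a' \<in> R" "b' \<in> R" "a * a' = 1" "b * b' = 1"
      using unit_if_notin_m ab by metis
    moreover have "(a * b) * (a' * b') = (a * a') * (b * b')" by (simp add: algebra_simps)
    ultimately have "1 \<in> m" using idealD(5)[OF ideal_m R_closed(4) ab(3), of a' b'] by simp
    then show False using one_notin_m by blast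
  qed
qed

text \<open>If a s \<notin> N, then N + R a s = S by simplicity, so (1 - r a) s \<in> N for some r,
  and 1 - r a is a unit.\<close>
lemma socle_element:
  assumes N: "submodule R N" and S: "submodule R S" "N \<subseteq> S" and simple: "mlength R N S = 1"
  obtains s where "s \<in> S" "s \<notin> N" "\<And>a. a \<in> m \<Longrightarrow> a * s \<in> N"
proof -
  have "N \<noteq> S" and between: "\<And>L. submodule R L \<Longrightarrow> N \<subseteq> L \<Longrightarrow> L \<subseteq> S \<Longrightarrow> L = N \<or> L = S"
    using simple mlength_eq_1_iff[OF N S] by blast+
  then obtain s where s: "s \<in> S" "s \<notin> N" using S(2) by blast
  have "a * s \<in> N" if a: "a \<in> m" for a
  proof (rule ccontr)
    assume as: "a * s \<notin> N"
    have aR: "a \<in> R" using a idealD(1)[OF ideal_m] by blast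
    have "a * s \<in> S" using submoduleD(3)[OF subring S(1) aR s(1)] .
    then have "adjoin R N (a * s) = S"
      using between[OF submodule_adjoin(1,2)[OF subring N]] adjoin_subset[OF S(1,2)]
        submodule_adjoin(3)[OF subring N] as by blast
    then obtain y r where yr: "s = y + r * (a * s)" "y \<in> N" "r \<in> R"
      using s(1) unfolding adjoin_def by blast
    have "r * a \<in> m" using idealD(4)[OF ideal_m yr(3) a] .
    then have "1 - r * a \<notin> m" using idealD(3)[OF ideal_m] one_notin_m by (metis diff_add_cancel)
    moreover have "1 - r * a \<in> R" using R_closed(2,4,6) yr(3) aR by blast
    ultimately obtain b where b: "b \<in> R" "(1 - r * a) * b = 1" using unit_if_notin_m by blast
    have "s = b * ((1 - r * a) * s)" using b(2) by (metis mult.assoc mult.commute mult_1)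
    also have "(1 - r * a) * s = y" using yr(1) by (simp add: algebra_simps)
    finally show False using submoduleD(3)[OF subring N b(1) yr(2)] s(2) by simp
  qed
  then show ?thesis using that s by blast
qed

end

locale one_dim_local = local_subring +
  assumes dim: "krull_dim R \<le> 1" and fractions: "total_ring_of_fractions R"
begin

text \<open>Otherwise a prime containing s but no power of x would lie strictly inside m and,
  containing a non-zerodivisor, strictly above another prime: a chain of length 2.\<close>
lemma power_in_principal:
  assumes s: "nzd R s" and x: "x \<in> m"
  obtains k r where "r \<in> R" "x ^ k = s * r"
proof (rule ccontr)
  assume no_power: "\<not> thesis"
  have sR: "s \<in> R" using s unfolding nzd_def by blast
  have xR: "x \<in> R" using x idealD(1)[OF ideal_m] by blast
  define M where "M = range (\<lambda>k. x ^ k)"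
  have sR_ideal: "ideal R ((*) s ` R)" using ideal_principal[OF subring sR] .
  have avoid: "(*) s ` R \<inter> M = {}" using no_power that unfolding M_def by fastforce
  have one_M: "1 \<in> M" unfolding M_def by (metis power_0 rangeI)
  have M_R: "M \<subseteq> R" unfolding M_def using R_closed(7) xR by blast
  have mult_M: "a * b \<in> M" if ab: "a \<in> M" "b \<in> M" for a b
  proof -
    obtain i j where "a = x ^ i" "b = x ^ j" using ab unfolding M_def by blast
    then have "a * b = x ^ (i + j)" by (simp add: power_add)
    then show ?thesis unfolding M_def by blast
  qed
  obtain P where P: "prime_ideal R P" "(*) s ` R \<subseteq> P" "P \<inter> M = {}"
    using prime_ideal_avoiding[OF subring sR_ideal avoid one_M M_R mult_M] by blast
  have P_ideal: "ideal R P" and PR: "P \<noteq> R" using P(1) unfolding prime_ideal_def by auto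
  have "x \<in> M" unfolding M_def by (metis power_one_right rangeI)
  then have "P \<subset> m" using ideal_subset_m[OF P_ideal PR] P(3) x by blast
  moreover have "s \<in> P" using P(2) R_closed(2) by (metis image_eqI mult_1_right subsetD)
  then obtain P' where "prime_ideal R P'" "P' \<subset> P"
    using prime_ideal_not_minimal[OF subring P(1) s] by blast
  ultimately have "2 \<le> krull_dim R" using two_le_krull_dim P(1) prime_m by blast
  then show False using dim order.trans[of 2 "krull_dim R" 1] by (simp add: numeral_eq_enat one_enat_def)
qed

lemma power_clears_denominator:
  assumes x: "x \<in> m"
  obtains k where "x ^ k * q \<in> R"
proof -
  obtain a s where as: "a \<in> R" "nzd R s" "q * s = a"
    using fractions unfolding total_ring_of_fractions_def by blast
  obtain k r where kr: "r \<in> R" "x ^ k = s * r" using power_in_principal[OF as(2) x] .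
  have "x ^ k * q = (q * s) * r" using kr(2) by (simp add: algebra_simps)
  then have "x ^ k * q = a * r" using as(3) by simp
  then have "x ^ k * q \<in> R" using R_closed(4)[OF as(1) kr(1)] by simp
  then show ?thesis by (rule that)
qed

lemma bounded_denominator:
  assumes x: "x \<in> m" and T: "fin_gen R T"
  obtains n where "\<And>t. t \<in> T \<Longrightarrow> x ^ n * t \<in> R"
proof -
  obtain F where F: "finite F" "T = rspan R F" using T unfolding fin_gen_def by blast
  have xR: "x \<in> R" using x idealD(1)[OF ideal_m] by blast
  have mono: "x ^ (j + k) * q \<in> R" if "x ^ k * q \<in> R" for j k q
  proof -
    have "x ^ (j + k) * q = x ^ j * (x ^ k * q)" by (simp add: power_add mult.assoc)
    then show ?thesis using R_closed(4)[OF R_closed(7)[OF xR] that] by simp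
  qed
  have "\<exists>n. \<forall>f\<in>F. x ^ n * f \<in> R" using F(1)
  proof (induction F rule: finite_induct)
    case (insert f F)
    then obtain n where n: "\<forall>g\<in>F. x ^ n * g \<in> R" by blast
    obtain k where k: "x ^ k * f \<in> R" using power_clears_denominator[OF x] by blast
    have "x ^ (n + k) * f \<in> R" "\<forall>g\<in>F. x ^ (k + n) * g \<in> R" using mono k n by blast+
    then have "\<forall>g\<in>insert f F. x ^ (n + k) * g \<in> R" by (simp add: add.commute)
    then show ?case by blast
  qed simp
  then obtain n where n: "\<forall>f\<in>F. x ^ n * f \<in> R" by blast
  have "x ^ n * t \<in> R" if t: "t \<in> T" for t
  proof -
    obtain c where c: "t = (\<Sum>f\<in>F. c f * f)" "\<forall>f\<in>F. c f \<in> R"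
      using t F(2) unfolding rspan_def by blast
    have "x ^ n * t = (\<Sum>f\<in>F. c f * (x ^ n * f))"
      unfolding c(1) sum_distrib_left by (simp add: algebra_simps)
    also have "\<dots> \<in> R"
      by (rule subring_sum[OF subring]) (use c(2) n R_closed(4) in blast)
    finally show ?thesis .
  qed
  then show ?thesis by (rule that)
qed

end

section \<open>Maps that are linear modulo a submodule\<close>

definition linear_mod :: "'q::comm_ring_1 set \<Rightarrow> 'q set \<Rightarrow> 'q set \<Rightarrow> ('q \<Rightarrow> 'q) \<Rightarrow> bool" where
  "linear_mod R N J f \<longleftrightarrow>
     (\<forall>a\<in>J. \<forall>b\<in>J. f (a + b) - (f a + f b) \<in> N) \<and> (\<forall>r\<in>R. \<forall>a\<in>J. f (r * a) - r * f a \<in> N)"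

lemma linear_modD:
  assumes "linear_mod R N J f"
  shows "a \<in> J \<Longrightarrow> b \<in> J \<Longrightarrow> f (a + b) - (f a + f b) \<in> N"
    "r \<in> R \<Longrightarrow> a \<in> J \<Longrightarrow> f (r * a) - r * f a \<in> N"
  using assms unfolding linear_mod_def by blast+

lemma linear_mod_scaled:
  assumes "linear_mod R N J g"
  shows "linear_mod R ((*) c ` N) J (\<lambda>a. c * g a)"
  unfolding linear_mod_def
proof (intro conjI ballI)
  fix a b assume "a \<in> J" "b \<in> J"
  then have "c * (g (a + b) - (g a + g b)) \<in> (*) c ` N" using linear_modD(1)[OF assms] by blast
  then show "c * g (a + b) - (c * g a + c * g b) \<in> (*) c ` N" by (simp add: algebra_simps)
next
  fix r a assume "r \<in> R" "a \<in> J"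
  then have "c * (g (r * a) - r * g a) \<in> (*) c ` N" using linear_modD(2)[OF assms] by blast
  then show "c * g (r * a) - r * (c * g a) \<in> (*) c ` N" by (simp add: algebra_simps)
qed

lemma linear_mod_precompose:
  assumes "linear_mod R N J f"
  shows "linear_mod R N {r \<in> R. c * r \<in> J} (\<lambda>a. f (c * a))"
  unfolding linear_mod_def
proof (intro conjI ballI)
  fix a b assume "a \<in> {r \<in> R. c * r \<in> J}" "b \<in> {r \<in> R. c * r \<in> J}"
  then have "f (c * a + c * b) - (f (c * a) + f (c * b)) \<in> N" using linear_modD(1)[OF assms] by blast
  then show "f (c * (a + b)) - (f (c * a) + f (c * b)) \<in> N" by (simp add: distrib_left)
next
  fix r a assume "r \<in> R" "a \<in> {r \<in> R. c * r \<in> J}"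
  then have "f (r * (c * a)) - r * f (c * a) \<in> N" using linear_modD(2)[OF assms] by blast
  then show "f (c * (r * a)) - r * f (c * a) \<in> N" by (simp add: mult.left_commute)
qed

lemma linear_mod_minus_mult:
  assumes "linear_mod R N J f"
  shows "linear_mod R N J (\<lambda>a. f a - a * y)"
  unfolding linear_mod_def
proof (intro conjI ballI)
  fix a b assume "a \<in> J" "b \<in> J"
  have "f (a + b) - (a + b) * y - ((f a - a * y) + (f b - b * y)) = f (a + b) - (f a + f b)"
    by (simp add: algebra_simps)
  then show "f (a + b) - (a + b) * y - ((f a - a * y) + (f b - b * y)) \<in> N"
    using linear_modD(1)[OF assms \<open>a \<in> J\<close> \<open>b \<in> J\<close>] by (simp only:)
next
  fix r a assume "r \<in> R" "a \<in> J"
  have "f (r * a) - r * a * y - r * (f a - a * y) = f (r * a) - r * f a"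
    by (simp add: algebra_simps)
  then show "f (r * a) - r * a * y - r * (f a - a * y) \<in> N"
    using linear_modD(2)[OF assms \<open>r \<in> R\<close> \<open>a \<in> J\<close>] by (simp only:)
qed

lemma linear_mod_zero:
  assumes "subring R" "submodule R N" "linear_mod R N J f" "0 \<in> J"
  shows "f 0 \<in> N"
proof -
  have "f (0 + 0) - (f 0 + f 0) \<in> N" using linear_modD(1)[OF assms(3,4,4)] .
  then have "- (- f 0) \<in> N" using submoduleD(4)[OF assms(1,2), of "- f 0"] by simp
  then show ?thesis by simp
qed

lemma injective_over_quotD:
  assumes inj: "injective_over_quot R A N M" and J: "ideal R J" "A \<subseteq> J" "f ` J \<subseteq> M"
    and f: "linear_mod R N J f" and fA: "\<And>a. a \<in> A \<Longrightarrow> f a \<in> N"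
  obtains y where "y \<in> M" "\<And>a. a \<in> J \<Longrightarrow> f a - a * y \<in> N"
proof -
  have "ideal R J \<and> A \<subseteq> J \<and> f ` J \<subseteq> M \<and> (\<forall>a\<in>J. \<forall>b\<in>J. f (a + b) - (f a + f b) \<in> N) \<and>
      (\<forall>r\<in>R. \<forall>a\<in>J. f (r * a) - r * f a \<in> N) \<and> (\<forall>a\<in>A. f a \<in> N)"
    using J f fA unfolding linear_mod_def by blast
  then have "\<exists>y\<in>M. \<forall>a\<in>J. f a - a * y \<in> N"
    using inj unfolding injective_over_quot_def by blast
  then show ?thesis using that by blast
qed

lemma injective_over_quotI:
  assumes "\<And>J f. ideal R J \<Longrightarrow> A \<subseteq> J \<Longrightarrow> f ` J \<subseteq> M \<Longrightarrow> linear_mod R N J f \<Longrightarrow>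
    (\<And>a. a \<in> A \<Longrightarrow> f a \<in> N) \<Longrightarrow> \<exists>y\<in>M. \<forall>a\<in>J. f a - a * y \<in> N"
  shows "injective_over_quot R A N M"
  unfolding injective_over_quot_def
proof (intro allI impI)
  fix J f
  assume H: "ideal R J \<and> A \<subseteq> J \<and> f ` J \<subseteq> M \<and> (\<forall>a\<in>J. \<forall>b\<in>J. f (a + b) - (f a + f b) \<in> N) \<and>
    (\<forall>r\<in>R. \<forall>a\<in>J. f (r * a) - r * f a \<in> N) \<and> (\<forall>a\<in>A. f a \<in> N)"
  then have lin: "linear_mod R N J f" unfolding linear_mod_def by blast
  show "\<exists>y\<in>M. \<forall>a\<in>J. f a - a * y \<in> N" by (rule assms[OF _ _ _ lin]) (use H in auto)
qed

lemma linear_mod_extend_well_defined: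
  assumes R: "subring R" and N: "submodule R N" and J: "ideal R J" and f: "linear_mod R N J f"
    and agree: "\<And>a. a \<in> R \<Longrightarrow> a * c \<in> J \<Longrightarrow> f (a * c) - a * v \<in> N"
    and j: "j \<in> J" "j' \<in> J" and a: "a \<in> R" "a' \<in> R" and eq: "j + a * c = j' + a' * c"
  shows "(f j + a * v) - (f j' + a' * v) \<in> N"
proof -
  have d: "j - j' \<in> J" using submoduleD(5)[OF R _ j] J unfolding ideal_def by blast
  have "(a' - a) * c = j - j'" using eq by (simp add: algebra_simps)
  then have "f (j - j') - (a' - a) * v \<in> N" using agree[of "a' - a"] subringD(6)[OF R a(2,1)] d by simp
  moreover have "f (j' + (j - j')) - (f j' + f (j - j')) \<in> N" using linear_modD(1)[OF f j(2) d] .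
  ultimately have "(f (j' + (j - j')) - (f j' + f (j - j'))) + (f (j - j') - (a' - a) * v) \<in> N"
    using submoduleD(2)[OF R N] by blast
  then show ?thesis by (simp add: algebra_simps)
qed

lemma linear_mod_extend:
  assumes R: "subring R" and N: "submodule R N" and J: "ideal R J" and c: "c \<in> R"
    and f: "linear_mod R N J f"
    and agree: "\<And>a. a \<in> R \<Longrightarrow> a * c \<in> J \<Longrightarrow> f (a * c) - a * v \<in> N"
  obtains h where "linear_mod R N (adjoin R J c) h"
    "\<And>b. b \<in> adjoin R J c \<Longrightarrow> \<exists>j\<in>J. \<exists>a\<in>R. h b = f j + a * v"
    "\<And>j. j \<in> J \<Longrightarrow> h j - f j \<in> N"
    "\<And>a. a \<in> R \<Longrightarrow> h (a * c) - a * v \<in> N"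
proof -
  note N_closed = submoduleD[OF R N] and R_closed = subringD[OF R] and J_closed = idealD[OF J]
  obtain \<alpha> \<beta> where \<alpha>\<beta>: "\<And>b. b \<in> adjoin R J c \<Longrightarrow> \<alpha> b \<in> J \<and> \<beta> b \<in> R \<and> b = \<alpha> b + \<beta> b * c"
    using adjoin_components by blast
  define h where "h b = f (\<alpha> b) + \<beta> b * v" for b
  have rep: "\<exists>j\<in>J. \<exists>a\<in>R. b = j + a * c \<and> h b = f j + a * v" if "b \<in> adjoin R J c" for b
    using \<alpha>\<beta>[OF that] unfolding h_def by blast
  have h_eq: "h (j + a * c) - (f j + a * v) \<in> N" if j: "j \<in> J" and a: "a \<in> R" for j a
  proof -
    have "j + a * c \<in> adjoin R J c" unfolding adjoin_def using j a by blast
    then obtain j' a' where "j' \<in> J" "a' \<in> R" "j + a * c = j' + a' * c" "h (j + a * c) = f j' + a' * v"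
      using rep by metis
    then show ?thesis using linear_mod_extend_well_defined[OF R N J f agree, of j' j a' a] j a by simp
  qed
  show ?thesis
  proof (rule that)
    show "linear_mod R N (adjoin R J c) h" unfolding linear_mod_def
    proof (intro conjI ballI)
      fix b b' assume "b \<in> adjoin R J c" "b' \<in> adjoin R J c"
      then obtain j a j' a' where p: "j \<in> J" "a \<in> R" "b = j + a * c" "h b = f j + a * v"
        "j' \<in> J" "a' \<in> R" "b' = j' + a' * c" "h b' = f j' + a' * v"
        using rep by meson
      have bb: "b + b' = (j + j') + (a + a') * c" using p by (simp add: algebra_simps)
      have "h (b + b') - (f (j + j') + (a + a') * v) \<in> N"
        unfolding bb by (rule h_eq[OF J_closed(3)[OF p(1,5)] R_closed(3)[OF p(2,6)]])
      moreover have "f (j + j') - (f j + f j') \<in> N" using linear_modD(1)[OF f] p by blast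
      ultimately have "(h (b + b') - (f (j + j') + (a + a') * v)) + (f (j + j') - (f j + f j')) \<in> N"
        using N_closed(2) by blast
      then show "h (b + b') - (h b + h b') \<in> N" using p by (simp add: algebra_simps)
    next
      fix r b assume r: "r \<in> R" and "b \<in> adjoin R J c"
      then obtain j a where p: "j \<in> J" "a \<in> R" "b = j + a * c" "h b = f j + a * v"
        using rep by meson
      have rb: "r * b = r * j + (r * a) * c" using p by (simp add: algebra_simps)
      have "h (r * b) - (f (r * j) + (r * a) * v) \<in> N"
        unfolding rb by (rule h_eq[OF J_closed(4)[OF r p(1)] R_closed(4)[OF r p(2)]])
      moreover have "f (r * j) - r * f j \<in> N" using linear_modD(2)[OF f r p(1)] .
      ultimately have "(h (r * b) - (f (r * j) + (r * a) * v)) + (f (r * j) - r * f j) \<in> N"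
        using N_closed(2) by blast
      then show "h (r * b) - r * h b \<in> N" using p by (simp add: algebra_simps)
    qed
    show "\<exists>j\<in>J. \<exists>a\<in>R. h b = f j + a * v" if "b \<in> adjoin R J c" for b
      using rep[OF that] by blast
    show "h j - f j \<in> N" if "j \<in> J" for j
      using h_eq[OF that R_closed(1)] by simp
    show "h (a * c) - a * v \<in> N" if "a \<in> R" for a
    proof -
      have "h (0 + a * c) - (f 0 + a * v) \<in> N" using h_eq[OF J_closed(2) that] .
      moreover have "f 0 \<in> N" using linear_mod_zero[OF R N f J_closed(2)] .
      ultimately have "(h (0 + a * c) - (f 0 + a * v)) + f 0 \<in> N" using N_closed(2) by blast
      then show ?thesis by (simp add: algebra_simps)
    qed
  qed
qed

section \<open>Fractional colons\<close>

definition frac_colon :: "'q::comm_ring_1 set \<Rightarrow> 'q set \<Rightarrow> 'q set" where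
  "frac_colon M L = {p. \<forall>l\<in>L. p * l \<in> M}"

lemma frac_colon_antimono: "L \<subseteq> L' \<Longrightarrow> frac_colon M L' \<subseteq> frac_colon M L"
  unfolding frac_colon_def by blast

lemma submodule_frac_colon:
  assumes M: "submodule R M"
  shows "submodule R (frac_colon M L)"
  unfolding submodule_def
proof (intro conjI ballI)
  show "0 \<in> frac_colon M L" using M unfolding submodule_def frac_colon_def by simp
next
  fix p q assume "p \<in> frac_colon M L" "q \<in> frac_colon M L"
  then show "p + q \<in> frac_colon M L"
    using M unfolding submodule_def frac_colon_def by (simp add: distrib_right)
next
  fix r p assume "r \<in> R" "p \<in> frac_colon M L"
  then show "r * p \<in> frac_colon M L"
    using M unfolding submodule_def frac_colon_def by (simp add: mult.assoc)
qed

lemma subset_frac_colon_frac_colon: "L \<subseteq> frac_colon M (frac_colon M L)"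
proof
  fix l assume l: "l \<in> L"
  have "l * p \<in> M" if "\<forall>l\<in>L. p * l \<in> M" for p
    using that l mult.commute[of l p] by metis
  then show "l \<in> frac_colon M (frac_colon M L)" unfolding frac_colon_def by blast
qed

lemma frac_colon_ring:
  assumes "subring R" "submodule R M"
  shows "frac_colon M R = M"
proof
  show "frac_colon M R \<subseteq> M"
  proof
    fix p assume "p \<in> frac_colon M R"
    then have "p * 1 \<in> M" using subringD(2)[OF assms(1)] unfolding frac_colon_def by blast
    then show "p \<in> M" by simp
  qed
  show "M \<subseteq> frac_colon M R"
  proof
    fix p assume "p \<in> M"
    then have "r * p \<in> M" if "r \<in> R" for r using submoduleD(3)[OF assms that] by blast
    then show "p \<in> frac_colon M R" unfolding frac_colon_def by (simp add: mult.commute)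
  qed
qed

section \<open>The canonical fractional ideal\<close>

locale canonical_ideal = one_dim_local R m for R m :: "'q::comm_ring_1 set" +
  fixes K :: "'q set" and x u :: 'q
  assumes R_K: "R \<subseteq> K" and K_fin: "fin_gen R K"
    and x_m: "x \<in> m" and x_u: "x * u = 1"
    and hull: "inj_hull_residue R ((*) x ` R) ((*) x ` K) K"
begin

lemma K_submodule: "submodule R K"
  using hull unfolding inj_hull_residue_def by blast

lemmas K_closed = submoduleD[OF subring K_submodule]

lemma xK_submodule: "submodule R ((*) x ` K)"
  using submodule_scaled[OF K_submodule] .

lemmas xK_closed = submoduleD[OF subring xK_submodule]

lemma x_R: "x \<in> R"
  using x_m idealD(1)[OF ideal_m] by blast

lemma u_x_cancel [simp]: "u * (x * z) = z" and x_u_cancel [simp]: "x * (u * z) = z"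
proof -
  have "u * (x * z) = (x * u) * z" "x * (u * z) = (x * u) * z" by (simp_all add: algebra_simps)
  then show "u * (x * z) = z" "x * (u * z) = z" using x_u by simp_all
qed

lemma x_u_cancel_inner [simp]: "x * (a * (u * z)) = a * z" "x * a * (u * z) = a * z"
  by (simp_all add: mult.left_commute[of x a] mult.assoc)

lemma x_power_cancel: "x ^ k * a = x ^ k * b \<Longrightarrow> a = b"
proof (induction k)
  case (Suc k)
  then have "u * (x * (x ^ k * a)) = u * (x * (x ^ k * b))" by (simp add: mult.assoc)
  then show ?case using Suc.IH by simp
qed simp

lemma mem_xK_iff: "z \<in> (*) x ` K \<longleftrightarrow> u * z \<in> K"
proof
  assume "z \<in> (*) x ` K"
  then show "u * z \<in> K" by auto
next
  assume "u * z \<in> K"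
  then have "x * (u * z) \<in> (*) x ` K" by blast
  then show "z \<in> (*) x ` K" by simp
qed

lemma one_K: "1 \<in> K"
  using R_K R_closed(2) by blast

lemma socle_mod_K:
  obtains s0 where "s0 \<notin> K" "\<And>a. a \<in> m \<Longrightarrow> a * s0 \<in> K"
proof -
  from hull[unfolded inj_hull_residue_def] obtain S
    where S: "submodule R S" "(*) x ` K \<subseteq> S" "mlength R ((*) x ` K) S = 1"
    by (elim conjE exE) simp
  obtain s where s: "s \<in> S" "s \<notin> (*) x ` K" "\<And>a. a \<in> m \<Longrightarrow> a * s \<in> (*) x ` K"
    using socle_element[OF xK_submodule S] by blast
  show ?thesis
  proof (rule that)
    show "u * s \<notin> K" using s(2) mem_xK_iff by blast
    show "a * (u * s) \<in> K" if "a \<in> m" for a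
      using s(3)[OF that] mem_xK_iff by (simp add: mult.left_commute)
  qed
qed

text \<open>The injectivity of K/xK over R/xR, transported along K/xK \<cong> u K/K.\<close>
lemma extend_into_inv_x_K:
  assumes J: "ideal R J" and g: "linear_mod R K J g"
    and xg: "\<And>a. a \<in> J \<Longrightarrow> x * g a \<in> K"
    and vanish: "\<And>r. r \<in> R \<Longrightarrow> x * r \<in> J \<Longrightarrow> g (x * r) \<in> K"
  obtains y where "\<And>a. a \<in> J \<Longrightarrow> g a - a * y \<in> K"
proof -
  let ?xK = "(*) x ` K" and ?J = "adjoin R J x"
  have f: "linear_mod R ?xK J (\<lambda>a. x * g a)" using linear_mod_scaled[OF g] .
  have agree: "x * g (a * x) - a * 0 \<in> ?xK" if "a \<in> R" "a * x \<in> J" for a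
  proof -
    have "x * g (x * a) \<in> ?xK" using vanish[of a] that by (simp add: mult.commute)
    then show ?thesis by (simp add: mult.commute)
  qed
  obtain h where h: "linear_mod R ?xK ?J h"
    "\<And>b. b \<in> ?J \<Longrightarrow> \<exists>j\<in>J. \<exists>a\<in>R. h b = x * g j + a * 0"
    "\<And>j. j \<in> J \<Longrightarrow> h j - x * g j \<in> ?xK"
    "\<And>a. a \<in> R \<Longrightarrow> h (a * x) - a * 0 \<in> ?xK"
    using linear_mod_extend[OF subring xK_submodule J x_R f agree] by blast
  have J': "ideal R ?J" using ideal_adjoin[OF subring J x_R] .
  have J_J': "J \<subseteq> ?J" and x_J': "x \<in> ?J"
    using submodule_adjoin(2,3)[OF subring] J unfolding ideal_def by blast+
  have xR_J': "(*) x ` R \<subseteq> ?J" using idealD(4)[OF J' _ x_J'] by (auto simp: mult.commute)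
  have h_K: "h ` ?J \<subseteq> K"
  proof
    fix z assume "z \<in> h ` ?J"
    then obtain b where "b \<in> ?J" "z = h b" by blast
    then obtain j where "j \<in> J" "z = x * g j" using h(2) by fastforce
    then show "z \<in> K" using xg by simp
  qed
  have h_xR: "h a \<in> ?xK" if a: "a \<in> (*) x ` R" for a
  proof -
    obtain r where r: "r \<in> R" "a = x * r" using a by blast
    then have "h (r * x) - r * 0 \<in> ?xK" using h(4) by blast
    then show ?thesis using r(2) by (simp add: mult.commute[of r x])
  qed
  have inj: "injective_over_quot R ((*) x ` R) ?xK K"
    using hull unfolding inj_hull_residue_def by blast
  obtain y where y: "\<And>b. b \<in> ?J \<Longrightarrow> h b - b * y \<in> ?xK"
    using injective_over_quotD[OF inj J' xR_J' h_K h(1) h_xR] by blast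
  show ?thesis
  proof (rule that)
    fix a assume a: "a \<in> J"
    then have "a \<in> ?J" using J_J' by blast
    then have "(h a - a * y) - (h a - x * g a) \<in> ?xK" using xK_closed(5)[OF y h(3)[OF a]] by blast
    moreover have "(h a - a * y) - (h a - x * g a) = x * (g a - a * (u * y))"
      by (simp add: right_diff_distrib)
    ultimately have "x * (g a - a * (u * y)) \<in> ?xK" by simp
    then show "g a - a * (u * y) \<in> K" unfolding mem_xK_iff by simp
  qed
qed

text \<open>Induction on the
  exponent: first extend a \<mapsto> f (x a) on {r. x r \<in> J}, then correct the remainder, which
  takes values in u K/K, by extend_into_inv_x_K.\<close>
lemma extend_linear_mod:
  assumes "ideal R J" "x ^ n \<in> J" "linear_mod R K J f"
  obtains y where "\<And>a. a \<in> J \<Longrightarrow> f a - a * y \<in> K"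
  using assms
proof (induction n arbitrary: J f thesis)
  case 0
  have "f a - a * f 1 \<in> K" if "a \<in> J" for a
    using linear_modD(2)[OF 0(4), of a 1] idealD(1)[OF 0(2)] that 0(3) by auto
  then show ?case by (rule 0(1))
next
  case (Suc n)
  define J' where "J' = {r \<in> R. x * r \<in> J}"
  have J': "ideal R J'" unfolding J'_def using ideal_preimage[OF subring Suc(3)] .
  have xn: "x ^ n \<in> J'" unfolding J'_def using R_closed(7)[OF x_R] Suc(4) by simp
  have lin: "linear_mod R K J' (\<lambda>a. f (x * a))"
    unfolding J'_def by (rule linear_mod_precompose[OF Suc(5)])
  obtain y1 where y1: "\<And>a. a \<in> J' \<Longrightarrow> f (x * a) - a * y1 \<in> K"
    using Suc.IH[OF _ J' xn lin] by blast
  define g where "g a = f a - a * (u * y1)" for a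
  have g_lin: "linear_mod R K J g"
    unfolding g_def by (rule linear_mod_minus_mult[OF Suc(5)])
  have xg: "x * g a \<in> K" if a: "a \<in> J" for a
  proof -
    have "a \<in> J'" unfolding J'_def using idealD(1,4)[OF Suc(3)] x_R a by blast
    then have "(f (x * a) - a * y1) - (f (x * a) - x * f a) \<in> K"
      using K_closed(5) y1 linear_modD(2)[OF Suc(5) x_R a] by blast
    moreover have "(f (x * a) - a * y1) - (f (x * a) - x * f a) = x * g a"
      unfolding g_def by (simp add: right_diff_distrib)
    ultimately show ?thesis by simp
  qed
  have vanish: "g (x * r) \<in> K" if r: "r \<in> R" "x * r \<in> J" for r
  proof -
    have "f (x * r) - r * y1 \<in> K" using y1 r unfolding J'_def by blast
    moreover have "g (x * r) = f (x * r) - r * y1" unfolding g_def by simp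
    ultimately show ?thesis by simp
  qed
  obtain y2 where y2: "\<And>a. a \<in> J \<Longrightarrow> g a - a * y2 \<in> K"
    using extend_into_inv_x_K[OF Suc(3) g_lin xg vanish] by blast
  have "f a - a * (u * y1 + y2) \<in> K" if a: "a \<in> J" for a
  proof -
    have "f a - a * (u * y1 + y2) = g a - a * y2" unfolding g_def by (simp add: algebra_simps)
    then show ?thesis using y2[OF a] by simp
  qed
  then show ?case by (rule Suc(2))
qed

text \<open>The socle element s0 of u K/K separates every r \<in> R - J from J: extend the map that is
  zero on J and sends r to s0 (well defined, as a r \<in> J forces a \<in> m), and represent it by
  multiplication with some y.\<close>
lemma double_colon_ideal_subset:
  assumes J: "ideal R J" "x ^ n \<in> J" and r: "r \<in> R" "r \<in> frac_colon K (frac_colon K J)"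
  shows "r \<in> J"
proof (rule ccontr)
  assume r_J: "r \<notin> J"
  obtain s0 where s0: "s0 \<notin> K" "\<And>a. a \<in> m \<Longrightarrow> a * s0 \<in> K"
    using socle_mod_K by blast
  have zero: "linear_mod R K J (\<lambda>_. 0)" unfolding linear_mod_def using K_closed(1) by simp
  have agree: "(\<lambda>_. 0) (a * r) - a * s0 \<in> K" if a: "a \<in> R" "a * r \<in> J" for a
  proof -
    have "a \<in> m"
    proof (rule ccontr)
      assume "a \<notin> m"
      then obtain b where b: "b \<in> R" "a * b = 1" using unit_if_notin_m a(1) by blast
      have "b * (a * r) = (a * b) * r" by (simp add: algebra_simps)
      then have "r = b * (a * r)" using b(2) by simp
      then show False using idealD(4)[OF J(1) b(1) a(2)] r_J by simp
    qed
    then show ?thesis using K_closed(4)[OF s0(2)] by simp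
  qed
  obtain h where h: "linear_mod R K (adjoin R J r) h"
    "\<And>b. b \<in> adjoin R J r \<Longrightarrow> \<exists>j\<in>J. \<exists>a\<in>R. h b = 0 + a * s0"
    "\<And>j. j \<in> J \<Longrightarrow> h j - 0 \<in> K"
    "\<And>a. a \<in> R \<Longrightarrow> h (a * r) - a * s0 \<in> K"
    using linear_mod_extend[OF subring K_submodule J(1) r(1) zero agree] by blast
  have J_adjoin: "J \<subseteq> adjoin R J r" and r_adjoin: "r \<in> adjoin R J r"
    using submodule_adjoin(2,3)[OF subring] J(1) unfolding ideal_def by blast+
  have xn: "x ^ n \<in> adjoin R J r" using J_adjoin J(2) by blast
  obtain y where y: "\<And>b. b \<in> adjoin R J r \<Longrightarrow> h b - b * y \<in> K"
    using extend_linear_mod[OF ideal_adjoin[OF subring J(1) r(1)] xn h(1)] by blast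
  have "y * j \<in> K" if j: "j \<in> J" for j
  proof -
    have "(h j - 0) - (h j - j * y) \<in> K" using K_closed(5)[OF h(3)[OF j] y] j J_adjoin by blast
    then show ?thesis by (simp add: mult.commute)
  qed
  then have "r * y \<in> K" using r(2) unfolding frac_colon_def by blast
  moreover have "h r - r * y \<in> K" using y[OF r_adjoin] .
  ultimately have "(h r - r * y) + r * y \<in> K" using K_closed(2) by blast
  moreover have "h r - s0 \<in> K" using h(4)[OF R_closed(2)] by simp
  ultimately have "((h r - r * y) + r * y) - (h r - s0) \<in> K" using K_closed(5) by blast
  then show False using s0(1) by simp
qed

lemma frac_colon_K_K: "frac_colon K K = R"
proof
  show "R \<subseteq> frac_colon K K" unfolding frac_colon_def using K_closed(3) by blast
  show "frac_colon K K \<subseteq> R"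
  proof
    fix q assume q: "q \<in> frac_colon K K"
    obtain n where n: "\<And>k. k \<in> K \<Longrightarrow> x ^ n * k \<in> R"
      using bounded_denominator[OF x_m K_fin] by blast
    let ?J = "(*) (x ^ n) ` R"
    have J: "ideal R ?J" using ideal_principal[OF subring R_closed(7)[OF x_R]] .
    have xn: "x ^ n \<in> ?J" using rev_image_eqI[OF R_closed(2), of "x ^ n" "(*) (x ^ n)"] by simp
    have "q * 1 \<in> K" using q one_K unfolding frac_colon_def by blast
    then have "x ^ n * q \<in> R" using n by simp
    moreover have "x ^ n * q \<in> frac_colon K (frac_colon K ?J)"
      unfolding frac_colon_def
    proof (intro CollectI ballI)
      fix p assume "p \<in> {p. \<forall>l\<in>?J. p * l \<in> K}"
      then have "p * x ^ n \<in> K" using xn by blast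
      then have "q * (p * x ^ n) \<in> K" using q unfolding frac_colon_def by blast
      then show "x ^ n * q * p \<in> K" by (simp add: algebra_simps)
    qed
    ultimately have "x ^ n * q \<in> ?J" using double_colon_ideal_subset[OF J xn] by blast
    then obtain r where "r \<in> R" "x ^ n * q = x ^ n * r" by blast
    then show "q \<in> R" using x_power_cancel[of n q r] by simp
  qed
qed

lemma double_colon_ideal:
  assumes J: "ideal R J" "x ^ n \<in> J"
  shows "frac_colon K (frac_colon K J) = J"
proof
  show "J \<subseteq> frac_colon K (frac_colon K J)" by (rule subset_frac_colon_frac_colon)
  have "K \<subseteq> frac_colon K J"
    using frac_colon_antimono[OF idealD(1)[OF J(1)], where M=K] frac_colon_ring[OF subring K_submodule] by simp
  then have "frac_colon K (frac_colon K J) \<subseteq> R"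
    using frac_colon_antimono[of K "frac_colon K J" K] frac_colon_K_K by simp
  then show "frac_colon K (frac_colon K J) \<subseteq> J" using double_colon_ideal_subset[OF J] by blast
qed

text \<open>Apply double_colon_ideal_subset to the ideal x^(2n) L.\<close>
lemma double_colon_submodule:
  assumes L: "submodule R L" "K \<subseteq> L" and n: "\<And>l. l \<in> L \<Longrightarrow> x ^ n * l \<in> R"
  shows "frac_colon K (frac_colon K L) = L"
proof
  show "L \<subseteq> frac_colon K (frac_colon K L)" by (rule subset_frac_colon_frac_colon)
  show "frac_colon K (frac_colon K L) \<subseteq> L"
  proof
    fix l assume l: "l \<in> frac_colon K (frac_colon K L)"
    let ?c = "x ^ (n + n)"
    let ?J = "(*) ?c ` L"
    have cR: "?c * q \<in> R" if "q \<in> L" for q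
    proof -
      have "x ^ n * (x ^ n * q) \<in> R" using R_closed(4)[OF R_closed(7)[OF x_R] n[OF that]] .
      then show ?thesis by (simp add: power_add mult.assoc)
    qed
    have J: "ideal R ?J" using submodule_scaled[OF L(1)] cR unfolding ideal_def by blast
    have c_J: "?c \<in> ?J" using rev_image_eqI[of 1 L ?c "(*) ?c"] L(2) one_K by auto
    have "x ^ n \<in> frac_colon K L" unfolding frac_colon_def using n R_K by blast
    then have "l * x ^ n \<in> K" using l unfolding frac_colon_def by blast
    then have "x ^ n * (l * x ^ n) \<in> R" using n L(2) by blast
    then have "?c * l \<in> R" by (simp add: power_add algebra_simps)
    moreover have "?c * l \<in> frac_colon K (frac_colon K ?J)"
      unfolding frac_colon_def
    proof (intro CollectI ballI)
      fix p assume p: "p \<in> {p. \<forall>j\<in>?J. p * j \<in> K}"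
      have "?c * p \<in> frac_colon K L"
        unfolding frac_colon_def
      proof (intro CollectI ballI)
        fix q assume "q \<in> L"
        then have "p * (?c * q) \<in> K" using p by blast
        then show "?c * p * q \<in> K" by (simp add: algebra_simps)
      qed
      then have "l * (?c * p) \<in> K" using l unfolding frac_colon_def by blast
      then show "?c * l * p \<in> K" by (simp add: algebra_simps)
    qed
    ultimately have "?c * l \<in> ?J" using double_colon_ideal_subset[OF J c_J] by blast
    then obtain q where "q \<in> L" "?c * l = ?c * q" by blast
    then show "l \<in> L" using x_power_cancel[of "n + n" l q] by simp
  qed
qed

end

section \<open>Rings between the canonical ideal and the integral closure\<close>

locale canonical_overring = canonical_ideal R m K x u
  for R m K :: "'q::comm_ring_1 set" and x u :: 'q +
  fixes T :: "'q set"
  assumes T_subring: "subring T" and R_T: "R \<subseteq> T" and K_T: "K \<subseteq> T" and R_ne_T: "R \<noteq> T"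
    and T_fin: "fin_gen R T"
begin

lemma T_submodule: "submodule R T"
  unfolding submodule_def
proof (intro conjI ballI)
  show "0 \<in> T" using subringD(1)[OF T_subring] .
  show "a + b \<in> T" if "a \<in> T" "b \<in> T" for a b
    using subringD(3)[OF T_subring] that by blast
  show "r * a \<in> T" if "r \<in> R" "a \<in> T" for r a
    using subringD(4)[OF T_subring] R_T that by blast
qed

lemma frac_colon_T: "frac_colon K T = colon R T"
proof
  show "frac_colon K T \<subseteq> colon R T"
  proof
    fix p assume p: "p \<in> frac_colon K T"
    have pt: "p * t \<in> R" if t: "t \<in> T" for t
    proof -
      have "p * t \<in> frac_colon K K"
        unfolding frac_colon_def
      proof (intro CollectI ballI)
        fix k assume "k \<in> K"
        then have "t * k \<in> T" using subringD(4)[OF T_subring t] K_T by blast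
        then have "p * (t * k) \<in> K" using p unfolding frac_colon_def by blast
        then show "p * t * k \<in> K" by (simp add: mult.assoc)
      qed
      then show ?thesis using frac_colon_K_K by simp
    qed
    then have "p * 1 \<in> R" using subringD(2)[OF T_subring] by blast
    then show "p \<in> colon R T" unfolding colon_def using pt by simp
  qed
  show "colon R T \<subseteq> frac_colon K T" unfolding colon_def frac_colon_def using R_K by blast
qed

lemma conductor_ideal: "ideal R (colon R T)"
proof -
  have "submodule R (colon R T)" using submodule_frac_colon[OF K_submodule, of T] frac_colon_T by simp
  moreover have "colon R T \<subseteq> R" unfolding colon_def by blast
  ultimately show ?thesis unfolding ideal_def by blast
qed

lemma conductor_ne_R: "colon R T \<noteq> R"
proof
  assume "colon R T = R"
  then have "1 * t \<in> R" if "t \<in> T" for t using R_closed(2) that unfolding colon_def by blast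
  then have "T \<subseteq> R" by auto
  then show False using R_T R_ne_T by blast
qed

lemma power_in_conductor:
  obtains n where "x ^ n \<in> colon R T" "\<And>t. t \<in> T \<Longrightarrow> x ^ n * t \<in> R"
proof -
  obtain n where n: "\<And>t. t \<in> T \<Longrightarrow> x ^ n * t \<in> R"
    using bounded_denominator[OF x_m T_fin] by blast
  have "x ^ n \<in> colon R T" unfolding colon_def using R_closed(7)[OF x_R] n by blast
  then show ?thesis using that n by blast
qed

lemma frac_colon_conductor: "frac_colon K (colon R T) = T"
proof -
  obtain n where n: "\<And>t. t \<in> T \<Longrightarrow> x ^ n * t \<in> R" using power_in_conductor by blast
  show ?thesis using double_colon_submodule[OF T_submodule K_T n] frac_colon_T by simp
qed

text \<open>L \<mapsto> K : L is an inclusion-reversing bijection between the submodules of T/K and the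
  ideals of R containing R : T.\<close>
lemma mlength_conductor: "mlength R K T = mlength R (colon R T) R"
proof (rule antisym)
  obtain n where n: "x ^ n \<in> colon R T" "\<And>t. t \<in> T \<Longrightarrow> x ^ n * t \<in> R"
    using power_in_conductor by blast
  have "mlength R K T \<le> mlength R (frac_colon K T) (frac_colon K K)"
  proof (rule mlength_le_antitone[OF frac_colon_antimono submodule_frac_colon[OF K_submodule]])
    fix L L' assume L: "submodule R L" "K \<subseteq> L" "L \<subseteq> T" and L': "submodule R L'" "K \<subseteq> L'" "L' \<subseteq> T"
      and eq: "frac_colon K L = frac_colon K L'"
    have nL: "x ^ n * l \<in> R" if "l \<in> L" for l using n(2) L(3) that by blast
    have nL': "x ^ n * l \<in> R" if "l \<in> L'" for l using n(2) L'(3) that by blast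
    have "L = frac_colon K (frac_colon K L)" using double_colon_submodule[OF L(1,2) nL] by simp
    also have "\<dots> = frac_colon K (frac_colon K L')" using eq by simp
    also have "\<dots> = L'" using double_colon_submodule[OF L'(1,2) nL'] .
    finally show "L = L'" .
  qed
  then show "mlength R K T \<le> mlength R (colon R T) R" using frac_colon_T frac_colon_K_K by simp
  have "mlength R (colon R T) R \<le> mlength R (frac_colon K R) (frac_colon K (colon R T))"
  proof (rule mlength_le_antitone[OF frac_colon_antimono submodule_frac_colon[OF K_submodule]])
    fix J J' assume J: "submodule R J" "colon R T \<subseteq> J" "J \<subseteq> R"
      and J': "submodule R J'" "colon R T \<subseteq> J'" "J' \<subseteq> R"
      and eq: "frac_colon K J = frac_colon K J'"
    have "ideal R J" "ideal R J'" using J J' unfolding ideal_def by blast+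
    moreover have "x ^ n \<in> J" "x ^ n \<in> J'" using n(1) J(2) J'(2) by blast+
    ultimately have "frac_colon K (frac_colon K J) = J" "frac_colon K (frac_colon K J') = J'"
      using double_colon_ideal by blast+
    then show "J = J'" using eq by metis
  qed
  then show "mlength R (colon R T) R \<le> mlength R K T"
    using frac_colon_ring[OF subring K_submodule] frac_colon_conductor by simp
qed

lemma ideal_frac_colon:
  assumes "K \<subseteq> L"
  shows "ideal R (frac_colon K L)"
proof -
  have "frac_colon K L \<subseteq> R" using frac_colon_antimono[OF assms, where M=K] frac_colon_K_K by simp
  then show ?thesis using submodule_frac_colon[OF K_submodule] unfolding ideal_def by blast
qed

lemma socle_T:
  shows "submodule R (frac_colon K m)" "K \<subset> frac_colon K m" "frac_colon K m \<subseteq> T"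
    and "frac_colon K (frac_colon K m) = m"
proof -
  show "submodule R (frac_colon K m)" using submodule_frac_colon[OF K_submodule] .
  show dd: "frac_colon K (frac_colon K m) = m"
    using double_colon_ideal[OF ideal_m, where n=1] x_m by simp
  have "K \<subseteq> frac_colon K m"
    using frac_colon_antimono[OF idealD(1)[OF ideal_m], where M=K] frac_colon_ring[OF subring K_submodule] by simp
  moreover have "K \<noteq> frac_colon K m" using dd frac_colon_K_K m_ne_R by auto
  ultimately show "K \<subset> frac_colon K m" by blast
  show "frac_colon K m \<subseteq> T"
    using frac_colon_antimono[OF ideal_subset_m[OF conductor_ideal conductor_ne_R], where M=K] frac_colon_conductor
    by simp
qed

lemma mlength_socle_T: "mlength R K (frac_colon K m) = 1"
proof -
  obtain n where n: "\<And>t. t \<in> T \<Longrightarrow> x ^ n * t \<in> R" using power_in_conductor by blast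
  have "L = K \<or> L = frac_colon K m"
    if L: "submodule R L" "K \<subseteq> L" "L \<subseteq> frac_colon K m" for L
  proof -
    have nL: "x ^ n * l \<in> R" if "l \<in> L" for l using n L(3) socle_T(3) that by blast
    have dd: "frac_colon K (frac_colon K L) = L" using double_colon_submodule[OF L(1,2) nL] .
    have "m \<subseteq> frac_colon K L" using frac_colon_antimono[OF L(3), where M=K] socle_T(4) by simp
    then have "frac_colon K L = m \<or> frac_colon K L = R"
      using ideal_subset_m[OF ideal_frac_colon[OF L(2)]] by blast
    then show ?thesis
    proof
      assume "frac_colon K L = m"
      then show ?thesis using dd by simp
    next
      assume "frac_colon K L = R"
      then show ?thesis using dd frac_colon_ring[OF subring K_submodule] by simp
    qed
  qed
  moreover have "K \<subseteq> frac_colon K m" "K \<noteq> frac_colon K m" using socle_T(2) by blast+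
  ultimately show ?thesis using mlength_eq_1_iff[OF K_submodule socle_T(1)] by simp
qed

lemma socle_T_essential:
  assumes L: "submodule R L" "K \<subset> L" "L \<subseteq> T"
  shows "frac_colon K m \<subseteq> L"
proof -
  obtain n where n: "\<And>t. t \<in> T \<Longrightarrow> x ^ n * t \<in> R" using power_in_conductor by blast
  have nL: "x ^ n * l \<in> R" if "l \<in> L" for l using n L(3) that by blast
  have K_L: "K \<subseteq> L" using L(2) by blast
  have dd: "frac_colon K (frac_colon K L) = L" using double_colon_submodule[OF L(1) K_L nL] .
  have "frac_colon K L \<noteq> R" using dd L(2) frac_colon_ring[OF subring K_submodule] by auto
  then have "frac_colon K L \<subseteq> m" using ideal_subset_m[OF ideal_frac_colon[OF K_L]] by blast
  then show ?thesis using frac_colon_antimono[of "frac_colon K L" m K] dd by simp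
qed

text \<open>The representing element y of a map on J \<supseteq> R : T lies in K : (R : T) = T.\<close>
lemma injective_conductor: "injective_over_quot R (colon R T) K T"
proof (rule injective_over_quotI)
  fix J f assume J: "ideal R J" "colon R T \<subseteq> J" and f: "linear_mod R K J f"
    and fI: "\<And>a. a \<in> colon R T \<Longrightarrow> f a \<in> K"
  obtain n where "x ^ n \<in> colon R T" using power_in_conductor by blast
  then have xn: "x ^ n \<in> J" using J(2) by blast
  obtain y where y: "\<And>a. a \<in> J \<Longrightarrow> f a - a * y \<in> K"
    using extend_linear_mod[OF J(1) xn f] by blast
  have "y * a \<in> K" if a: "a \<in> colon R T" for a
  proof -
    have "f a - (f a - a * y) \<in> K" using K_closed(5)[OF fI[OF a] y] a J(2) by blast
    then show ?thesis by (simp add: mult.commute)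
  qed
  then have "y \<in> frac_colon K (colon R T)" unfolding frac_colon_def by blast
  then have "y \<in> T" using frac_colon_conductor by simp
  then show "\<exists>y\<in>T. \<forall>a\<in>J. f a - a * y \<in> K" using y by blast
qed

lemma inj_hull_conductor: "inj_hull_residue R (colon R T) K T"
  unfolding inj_hull_residue_def
proof (intro conjI exI[of _ "frac_colon K m"] allI impI)
  show "submodule R K" "submodule R T" "K \<subseteq> T" by (fact K_submodule, fact T_submodule, fact K_T)
  show "\<forall>a\<in>colon R T. \<forall>t\<in>T. a * t \<in> K" unfolding colon_def using R_K by blast
  show "injective_over_quot R (colon R T) K T" by (fact injective_conductor)
  show "submodule R (frac_colon K m)" "frac_colon K m \<subseteq> T" by (fact socle_T(1), fact socle_T(3))
  show "K \<subseteq> frac_colon K m" using socle_T(2) by blast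
  show "mlength R K (frac_colon K m) = 1" by (fact mlength_socle_T)
  fix L assume "submodule R L \<and> K \<subset> L \<and> L \<subseteq> T"
  then show "K \<subset> L \<inter> frac_colon K m" using socle_T_essential socle_T(2) by blast
qed

end


theorem proposition3p3:
  fixes R m K T :: "'q::comm_ring_1 set"
  assumes "total_ring_of_fractions R"
    and "cohen_macaulay_local R m" and "krull_dim R = 1"
    and "R \<subseteq> K" and "K \<subseteq> integral_closure R" and "canonical_module_dim1 R m K"
    and "subring T" and "R \<subseteq> T" and "T \<subseteq> integral_closure R" and "fin_gen R T"
    and "K \<subseteq> T" and "R \<noteq> T"
  shows "inj_hull_residue R (colon R T) K T \<and> mlength R K T = mlength R (colon R T) R"
proof -
  have local: "local_ring R m" using assms(2) unfolding cohen_macaulay_local_def by blast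
  obtain x where x: "x \<in> m" "nzd R x" and hull: "inj_hull_residue R ((*) x ` R) ((*) x ` K) K"
    using assms(6) unfolding canonical_module_dim1_def by blast
  obtain u where u: "x * u = 1" using assms(1) x(2) unfolding total_ring_of_fractions_def by blast
  have K_fin: "fin_gen R K" using assms(6) unfolding canonical_module_dim1_def by blast
  interpret canonical_overring R m K x u T
    by unfold_locales (use local assms(1,3,4,7,8,10,11,12) x(1) u hull K_fin in auto)
  show ?thesis using inj_hull_conductor mlength_conductor by blast
qed

end
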